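(* Let $n$ be a positive integer. For any finite simple graph $H$, the strong product $K_n \boxtimes H$ is well-dominated if and only if $H$ is well-dominated.
   Context: A set $D$ of vertices of a graph is dominating if every vertex is in $D$ or adjacent to a vertex of $D$. A graph is well-dominated if every minimal (with respect to inclusion) dominating set is a minimum dominating set. The strong product $G\boxtimes H$ has vertex set $V(G)\times V(H)$, with distinct $(g_1,h_1)$ and $(g_2,h_2)$ adjacent iff ($g_1=g_2$ and $h_1h_2\in E(H)$), or ($h_1=h_2$ and $g_1g_2\in E(G)$), or ($g_1g_2\in E(G)$ and $h_1h_2\in E(H)$). *)

theory Defs
  imports Main
begin

definition simple_graph :: "'a set \<Rightarrow> ('a \<Rightarrow> 'a \<Rightarrow> bool) \<Rightarrow> bool" where
  "simple_graph V E \<longleftrightarrow> finite V \<and> (\<forall>x y. E x y \<longrightarrow> x \<in> V \<and> y \<in> V)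
     \<and> (\<forall>x y. E x y \<longrightarrow> E y x) \<and> (\<forall>x. \<not> E x x)"

definition dominating :: "'a set \<Rightarrow> ('a \<Rightarrow> 'a \<Rightarrow> bool) \<Rightarrow> 'a set \<Rightarrow> bool" where
  "dominating V E D \<longleftrightarrow> D \<subseteq> V \<and> (\<forall>v\<in>V. v \<in> D \<or> (\<exists>u\<in>D. E u v))"

definition minimal_dominating :: "'a set \<Rightarrow> ('a \<Rightarrow> 'a \<Rightarrow> bool) \<Rightarrow> 'a set \<Rightarrow> bool" where
  "minimal_dominating V E D \<longleftrightarrow> dominating V E D \<and> (\<forall>D'. D' \<subset> D \<longrightarrow> \<not> dominating V E D')"

definition minimum_dominating :: "'a set \<Rightarrow> ('a \<Rightarrow> 'a \<Rightarrow> bool) \<Rightarrow> 'a set \<Rightarrow> bool" where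
  "minimum_dominating V E D \<longleftrightarrow> dominating V E D \<and> (\<forall>D'. dominating V E D' \<longrightarrow> card D \<le> card D')"

definition well_dominated :: "'a set \<Rightarrow> ('a \<Rightarrow> 'a \<Rightarrow> bool) \<Rightarrow> bool" where
  "well_dominated V E \<longleftrightarrow> (\<forall>D. minimal_dominating V E D \<longrightarrow> minimum_dominating V E D)"

definition strong_prod_edges ::
  "('a \<Rightarrow> 'a \<Rightarrow> bool) \<Rightarrow> ('b \<Rightarrow> 'b \<Rightarrow> bool) \<Rightarrow> 'a \<times> 'b \<Rightarrow> 'a \<times> 'b \<Rightarrow> bool" where
  "strong_prod_edges E1 E2 p q \<longleftrightarrow> p \<noteq> q \<and>
     ((fst p = fst q \<and> E2 (snd p) (snd q)) \<or>
      (snd p = snd q \<and> E1 (fst p) (fst q)) \<or>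
      (E1 (fst p) (fst q) \<and> E2 (snd p) (snd q)))"

definition complete_vertices :: "nat \<Rightarrow> nat set" where
  "complete_vertices n = {0..<n}"

definition complete_edges :: "nat \<Rightarrow> nat \<Rightarrow> nat \<Rightarrow> bool" where
  "complete_edges n i j \<longleftrightarrow> i < n \<and> j < n \<and> i \<noteq> j"

end

theory Submission
  imports Defs
begin

text \<open>Two vertices of \<open>K\<^sub>n \<boxtimes> H\<close> are equal or adjacent exactly when their \<open>H\<close>-coordinates
  are, so a set dominates \<open>K\<^sub>n \<boxtimes> H\<close> iff its projection to \<open>H\<close> dominates \<open>H\<close>. For any such
  surjective projection, a minimal dominating set of the product is mapped injectively onto a
  minimal dominating set of \<open>H\<close>, and any section lifts minimal dominating sets of \<open>H\<close> to
  minimal dominating sets of the product of the same size. Hence the two graphs have the same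
  domination number and the same sizes of minimal dominating sets.\<close>

lemma dominating_iff_closed_neighbour:
  "dominating V E D \<longleftrightarrow> D \<subseteq> V \<and> (\<forall>v\<in>V. \<exists>u\<in>D. u = v \<or> E u v)"
  unfolding dominating_def by blast

locale dominating_projection =
  fixes V' :: "'b set" and E' :: "'b \<Rightarrow> 'b \<Rightarrow> bool"
    and V :: "'a set" and E :: "'a \<Rightarrow> 'a \<Rightarrow> bool"
    and f :: "'b \<Rightarrow> 'a"
  assumes finite_vertices: "finite V'"
    and image_vertices: "f ` V' = V"
    and dominating_iff_image: "dominating V' E' D \<longleftrightarrow> D \<subseteq> V' \<and> dominating V E (f ` D)"
begin

lemma inj_on_minimal_dominating:
  assumes "minimal_dominating V' E' D"
  shows "inj_on f D"
proof (rule inj_onI, rule ccontr)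
  fix p q assume "p \<in> D" "q \<in> D" "f p = f q" "p \<noteq> q"
  then have "f q \<in> f ` (D - {q})" by (metis DiffI image_eqI singletonD)
  with \<open>q \<in> D\<close> have "f ` (D - {q}) = f ` D" by blast
  moreover have "D \<subseteq> V'" "dominating V E (f ` D)"
    using assms by (simp_all add: minimal_dominating_def dominating_iff_image)
  ultimately have "dominating V' E' (D - {q})" by (auto simp: dominating_iff_image)
  with assms \<open>q \<in> D\<close> show False unfolding minimal_dominating_def by blast
qed

lemma minimal_dominating_image:
  assumes min: "minimal_dominating V' E' D"
  shows "minimal_dominating V E (f ` D)"
  unfolding minimal_dominating_def
proof (intro conjI allI impI notI)
  show "dominating V E (f ` D)"
    using min by (simp add: minimal_dominating_def dominating_iff_image)
next
  fix S assume "S \<subset> f ` D" and "dominating V E S"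
  define D' where "D' = {p \<in> D. f p \<in> S}"
  have "f ` D' = S" and "D' \<subset> D"
    using \<open>S \<subset> f ` D\<close> by (auto simp: D'_def)
  moreover have "D \<subseteq> V'"
    using min by (simp add: minimal_dominating_def dominating_iff_image)
  ultimately have "dominating V' E' D'"
    using \<open>dominating V E S\<close> by (auto simp: dominating_iff_image)
  with min \<open>D' \<subset> D\<close> show False by (auto simp: minimal_dominating_def)
qed

abbreviation lift :: "'a set \<Rightarrow> 'b set" where
  "lift S \<equiv> inv_into V' f ` S"

lemma image_lift: "S \<subseteq> V \<Longrightarrow> f ` lift S = S"
  by (rule image_inv_into_cancel[OF image_vertices])

lemma card_lift: "S \<subseteq> V \<Longrightarrow> card (lift S) = card S"
  by (metis card_image image_vertices inj_on_inv_into)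

lemma dominating_lift:
  assumes "dominating V E S"
  shows "dominating V' E' (lift S)"
proof -
  have "S \<subseteq> V" using assms by (simp add: dominating_def)
  then have "lift S \<subseteq> V'"
    using image_vertices by (auto intro: inv_into_into)
  with assms \<open>S \<subseteq> V\<close> show ?thesis by (simp add: dominating_iff_image image_lift)
qed

lemma lift_image:
  assumes "D \<subseteq> lift V"
  shows "lift (f ` D) = D"
proof -
  have "inv_into V' f (f d) = d" if "d \<in> D" for d
  proof -
    from that assms obtain y where "y \<in> V" "d = inv_into V' f y" by blast
    then show ?thesis using image_vertices by (simp add: f_inv_into_f)
  qed
  then show ?thesis by (simp add: image_image cong: image_cong)
qed

lemma minimal_dominating_lift:
  assumes min: "minimal_dominating V E S"
  shows "minimal_dominating V' E' (lift S)"
  unfolding minimal_dominating_def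
proof (intro conjI allI impI notI)
  show "dominating V' E' (lift S)"
    using min by (simp add: minimal_dominating_def dominating_lift)
next
  fix D assume "D \<subset> lift S" and "dominating V' E' D"
  have "S \<subseteq> V" using min by (simp add: minimal_dominating_def dominating_def)
  then have "f ` D \<subseteq> S"
    using \<open>D \<subset> lift S\<close> image_lift by blast
  moreover have "f ` D \<noteq> S"
    using lift_image[of D] \<open>D \<subset> lift S\<close> \<open>S \<subseteq> V\<close> by blast
  moreover have "dominating V E (f ` D)"
    using \<open>dominating V' E' D\<close> by (simp add: dominating_iff_image)
  ultimately show False using min by (auto simp: minimal_dominating_def)
qed

lemma card_image_dominating_le:
  assumes "dominating V' E' D"
  shows "card (f ` D) \<le> card D"
proof -
  have "D \<subseteq> V'" using assms by (simp add: dominating_def)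
  then show ?thesis using finite_vertices by (meson card_image_le finite_subset)
qed

theorem well_dominated_iff: "well_dominated V' E' \<longleftrightarrow> well_dominated V E"
proof
  assume well: "well_dominated V' E'"
  show "well_dominated V E"
    unfolding well_dominated_def minimum_dominating_def
  proof (intro allI impI conjI)
    fix S assume min: "minimal_dominating V E S"
    then show "dominating V E S" by (simp add: minimal_dominating_def)
    fix S' assume "dominating V E S'"
    have "minimum_dominating V' E' (lift S)"
      using well minimal_dominating_lift[OF min] unfolding well_dominated_def by blast
    then have "card (lift S) \<le> card (lift S')"
      using dominating_lift[OF \<open>dominating V E S'\<close>] unfolding minimum_dominating_def by blast
    moreover have "S \<subseteq> V" "S' \<subseteq> V"
      using min \<open>dominating V E S'\<close> by (auto simp: minimal_dominating_def dominating_def)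
    ultimately show "card S \<le> card S'" by (simp add: card_lift)
  qed
next
  assume well: "well_dominated V E"
  show "well_dominated V' E'"
    unfolding well_dominated_def minimum_dominating_def
  proof (intro allI impI conjI)
    fix D assume min: "minimal_dominating V' E' D"
    then show "dominating V' E' D" by (simp add: minimal_dominating_def)
    fix D' assume "dominating V' E' D'"
    have "card D = card (f ` D)"
      using inj_on_minimal_dominating[OF min] by (simp add: card_image)
    also have "\<dots> \<le> card (f ` D')"
    proof -
      have "minimum_dominating V E (f ` D)"
        using well minimal_dominating_image[OF min] unfolding well_dominated_def by blast
      moreover have "dominating V E (f ` D')"
        using \<open>dominating V' E' D'\<close> dominating_iff_image by blast
      ultimately show ?thesis unfolding minimum_dominating_def by blast
    qed
    also have "\<dots> \<le> card D'"
      using card_image_dominating_le[OF \<open>dominating V' E' D'\<close>] .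
    finally show "card D \<le> card D'" .
  qed
qed

end

lemma strong_prod_complete_closed_adjacent_iff:
  assumes "p \<in> complete_vertices n \<times> V" and "q \<in> complete_vertices n \<times> V"
  shows "p = q \<or> strong_prod_edges (complete_edges n) E p q \<longleftrightarrow> snd p = snd q \<or> E (snd p) (snd q)"
  using assms prod_eq_iff[of p q]
  by (auto simp: strong_prod_edges_def complete_edges_def complete_vertices_def)

lemma dominating_strong_prod_complete_iff:
  assumes "n > 0"
  shows "dominating (complete_vertices n \<times> V) (strong_prod_edges (complete_edges n) E) D
     \<longleftrightarrow> D \<subseteq> complete_vertices n \<times> V \<and> dominating V E (snd ` D)"
proof -
  let ?P = "complete_vertices n \<times> V" and ?adj = "strong_prod_edges (complete_edges n) E"
  have "(\<forall>q\<in>?P. \<exists>p\<in>D. p = q \<or> ?adj p q) \<longleftrightarrow> (\<forall>w\<in>V. \<exists>u\<in>snd ` D. u = w \<or> E u w)"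
    if "D \<subseteq> ?P"
  proof
    assume dom: "\<forall>q\<in>?P. \<exists>p\<in>D. p = q \<or> ?adj p q"
    show "\<forall>w\<in>V. \<exists>u\<in>snd ` D. u = w \<or> E u w"
    proof
      fix w assume "w \<in> V"
      with \<open>n > 0\<close> have "(0, w) \<in> ?P" by (simp add: complete_vertices_def)
      with dom obtain p where "p \<in> D" "p = (0, w) \<or> ?adj p (0, w)" by blast
      with \<open>D \<subseteq> ?P\<close> \<open>(0, w) \<in> ?P\<close> show "\<exists>u\<in>snd ` D. u = w \<or> E u w"
        using strong_prod_complete_closed_adjacent_iff[of p n V "(0, w)" E] by force
    qed
  next
    assume dom: "\<forall>w\<in>V. \<exists>u\<in>snd ` D. u = w \<or> E u w"
    show "\<forall>q\<in>?P. \<exists>p\<in>D. p = q \<or> ?adj p q"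
    proof
      fix q assume "q \<in> ?P"
      with dom obtain p where "p \<in> D" "snd p = snd q \<or> E (snd p) (snd q)" by fastforce
      with \<open>D \<subseteq> ?P\<close> \<open>q \<in> ?P\<close> show "\<exists>p\<in>D. p = q \<or> ?adj p q"
        using strong_prod_complete_closed_adjacent_iff[of p n V q E] by blast
    qed
  qed
  moreover have "D \<subseteq> ?P \<Longrightarrow> snd ` D \<subseteq> V" by auto
  ultimately show ?thesis
    unfolding dominating_iff_closed_neighbour by (cases "D \<subseteq> ?P") simp_all
qed

theorem theorem4:
  fixes n :: nat and V :: "'a set" and E :: "'a \<Rightarrow> 'a \<Rightarrow> bool"
  assumes "n > 0" and "simple_graph V E"
  shows "well_dominated (complete_vertices n \<times> V) (strong_prod_edges (complete_edges n) E)
         \<longleftrightarrow> well_dominated V E"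
proof -
  have "dominating_projection (complete_vertices n \<times> V) (strong_prod_edges (complete_edges n) E) V E snd"
  proof
    show "finite (complete_vertices n \<times> V)"
      using \<open>simple_graph V E\<close> by (simp add: simple_graph_def complete_vertices_def)
    show "snd ` (complete_vertices n \<times> V) = V"
      using \<open>n > 0\<close> by (simp add: complete_vertices_def)
  qed (rule dominating_strong_prod_complete_iff[OF \<open>n > 0\<close>])
  then show ?thesis by (rule dominating_projection.well_dominated_iff)
qed

end
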